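(* Assume in addition $L\ge\mu$. Consider any sequences generated by Algorithm 4, let $\sigma:=\hat\sigma+\sigma_u$, $x^*$ the unique minimizer of $h=f+g$, $d_0:=\|x^*-x^0\|$ and $\gamma:=\sqrt{\sigma_u/(1+\sigma_u)}$, $\rho:=1-\gamma\sqrt{\mu/L}$. Then: (a) for all $k\ge1$, $h(y^k)-h(x^* )\le\frac{Ld_0^2}{2\sigma_u}\rho^{k-1}$ and $\max\{\|x^*-y^k\|,\|x^*-x^k\|\}\le\sqrt{\frac{L}{\sigma_u\mu}}\,d_0\,\rho^{(k-1)/2}$; (b) for all $k\ge1$, $v^{k+1}\in\partial_{\varepsilon_{k+1}}f(y^{k+1})+\nabla g(y^{k+1})$, $\|v^{k+1}\|\le\frac{6d_0L^{3/2}}{\mu^{1/2}\sigma_u^{3/2}}\Big(1+\sigma\sqrt{1+\frac{\sigma_u\mu}{L}}\Big)\rho^{(k-1)/2}$, and $\varepsilon_{k+1}\le\frac{3\sigma^2d_0^2L^2}{\sigma_u^2\mu}\rho^{k-1}$.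
   Context: $\mathcal H$ is a finite-dimensional real inner product space with norm $\|\cdot\|$. $f,g:\mathcal H\to(-\infty,\infty]$ are proper, closed, convex, $h:=f+g$ has nonempty domain; $g$ is $\mu$-strongly convex ($\mu>0$). $\Omega\subseteq\mathcal H$ is a nonempty closed convex set containing $\mathrm{dom}\,f$, $P_\Omega$ is the orthogonal projection onto $\Omega$, and $g$ is differentiable on an open set containing $\Omega$ with $\|\nabla g(x)-\nabla g(y)\|\le L\|x-y\|$ for $x,y\in\Omega$, $L>0$. For $\varepsilon\ge0$, $\partial_\varepsilon f(y):=\{u: f(w)\ge f(y)+\langle u,w-y\rangle-\varepsilon\ \forall w\}$. Definition: for $\hat\sigma\ge0$, $(y,u,\varepsilon)\in\mathcal H\times\mathcal H\times[0,\infty)$ is a $\hat\sigma$-approximate PG solution at $(x,\lambda)\in\mathcal H\times(0,\infty)$ if, with $z:=P_\Omega(x)$, $u\in\partial_\varepsilon f(y)$ and $\frac{\|\lambda(u+\nabla g(z))+y-x\|^2}{1+\lambda\mu}+2\lambda\varepsilon\le\hat\sigma^2\|y-x\|^2$. Algorithm 4: Choose $x^0,y^0\in\mathcal H$, $\hat\sigma\ge0$, $0<\sigma_u\le1$ with $\sigma_u+\hat\sigma<1$; let $\lambda:=\frac{\sigma_u}{\sqrt{(\sigma_u\mu/2)^2+L^2}-\sigma_u\mu/2}$ and $A_0=0$. For $k=0,1,\dots$: set $a_{k+1}=\frac{(1+2\mu A_k)\lambda+\sqrt{(1+2\mu A_k)^2\lambda^2+4(1+\mu A_k)A_k\lambda}}{2}$,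 $\tilde x^k=\frac{a_{k+1}-\mu A_k\lambda}{A_k+a_{k+1}}x^k+\frac{A_k+\mu A_k\lambda}{A_k+a_{k+1}}y^k$, compute a $\hat\sigma$-approximate PG solution $(y^{k+1},u^{k+1},\varepsilon_{k+1})$ at $(\tilde x^k,\lambda)$, then set $A_{k+1}=A_k+a_{k+1}$, $v^{k+1}=u^{k+1}+\nabla g(y^{k+1})$, $x^{k+1}=\frac{1+\mu A_k}{1+\mu A_{k+1}}x^k+\frac{\mu a_{k+1}}{1+\mu A_{k+1}}y^{k+1}-\frac{a_{k+1}}{1+\mu A_{k+1}}v^{k+1}$. "Sequences generated by Algorithm 4" means any sequences satisfying these relations for all $k\ge0$. *)

theory Defs
  imports "HOL-Analysis.Analysis"
begin

text \<open>Extended-real-valued functions on a finite-dimensional real inner product space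
 (a type of class euclidean_space); the value \<infinity> encodes points outside the domain.\<close>

definition edom :: "('a \<Rightarrow> ereal) \<Rightarrow> 'a set" where
  "edom f = {x. f x < \<infinity>}"

definition proper_fun :: "('a \<Rightarrow> ereal) \<Rightarrow> bool" where
  "proper_fun f \<longleftrightarrow> (\<forall>x. f x \<noteq> -\<infinity>) \<and> (\<exists>x. f x \<noteq> \<infinity>)"

definition closed_fun :: "('a::topological_space \<Rightarrow> ereal) \<Rightarrow> bool" where
  "closed_fun f \<longleftrightarrow> closed {(x, t::real). f x \<le> ereal t}"

definition convex_fun :: "('a::real_vector \<Rightarrow> ereal) \<Rightarrow> bool" where
  "convex_fun f \<longleftrightarrow> (\<forall>x y t. 0 < t \<and> t < 1 \<longrightarrow>
      f (t *\<^sub>R x + (1 - t) *\<^sub>R y) \<le> ereal t * f x + ereal (1 - t) * f y)"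

definition strongly_convex_fun :: "real \<Rightarrow> ('a::real_normed_vector \<Rightarrow> ereal) \<Rightarrow> bool" where
  "strongly_convex_fun \<mu> f \<longleftrightarrow> (\<forall>x y t. 0 < t \<and> t < 1 \<longrightarrow>
      f (t *\<^sub>R x + (1 - t) *\<^sub>R y) \<le> ereal t * f x + ereal (1 - t) * f y
         - ereal (\<mu> / 2 * t * (1 - t) * (norm (x - y))\<^sup>2))"

definition eps_subdiff :: "('a::real_inner \<Rightarrow> ereal) \<Rightarrow> real \<Rightarrow> 'a \<Rightarrow> 'a set" where
  "eps_subdiff f \<epsilon> y = {u. \<forall>w. f w \<ge> f y + ereal (inner u (w - y) - \<epsilon>)}"

text \<open>\<hat>\<sigma>-approximate PG solution (y,u,\<epsilon>) at (x,\<lambda>); G is the gradient of g,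
  \<Omega> the set with projection closest_point \<Omega>.\<close>
definition approx_PG_sol ::
  "('a::euclidean_space \<Rightarrow> ereal) \<Rightarrow> ('a \<Rightarrow> 'a) \<Rightarrow> 'a set \<Rightarrow> real \<Rightarrow> real
    \<Rightarrow> 'a \<Rightarrow> real \<Rightarrow> 'a \<Rightarrow> 'a \<Rightarrow> real \<Rightarrow> bool" where
  "approx_PG_sol f G \<Omega> \<mu> \<sigma>h x lam y u \<epsilon> \<longleftrightarrow>
     (let z = closest_point \<Omega> x in
       \<epsilon> \<ge> 0 \<and> u \<in> eps_subdiff f \<epsilon> y \<and>
       (norm (lam *\<^sub>R (u + G z) + y - x))\<^sup>2 / (1 + lam * \<mu>) + 2 * lam * \<epsilon>
          \<le> \<sigma>h\<^sup>2 * (norm (y - x))\<^sup>2)"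

end

theory Submission
  imports Defs
begin

text \<open>The proof is an estimate-sequence argument. The potential
  \<open>A k * (h (y k) - h xstar) + (1 + \<mu> * A k)/2 * \<parallel>x k - xstar\<parallel>\<^sup>2\<close> does not increase:
  \<open>x (k+1)\<close> minimises a strongly convex quadratic model, and the relative-error criterion
  of the approximate proximal step, rewritten with the quadratic equation that defines
  \<open>a (k+1)\<close>, bounds the minimum of that model from below. Because \<open>\<nabla>g\<close> is
  \<open>L\<close>-Lipschitz and the projection is nonexpansive, the criterion, stated for \<open>\<nabla>g\<close> at the
  projection of \<open>xt k\<close>, holds with \<open>\<sigma> = \<sigma>h + \<sigma>u\<close> for the exact residual \<open>v (k+1)\<close>.
  The choice of \<open>lam\<close> makes \<open>A k\<close> grow at least geometrically with ratio \<open>1/\<rho>\<close> from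
  \<open>A 1 \<ge> lam \<ge> \<sigma>u/L\<close>, so the bound \<open>d0\<^sup>2/2\<close> on the potential gives the rate for the
  objective, then for \<open>\<parallel>y k - xstar\<parallel>\<close> by quadratic growth and for \<open>\<parallel>x k - xstar\<parallel>\<close>
  directly. Finally \<open>v (k+1)\<close> and \<open>\<epsilon> (k+1)\<close> are bounded by the step length
  \<open>\<parallel>y (k+1) - xt k\<parallel>\<close>, which the distance bounds control.\<close>

section \<open>Inequalities in inner product spaces\<close>

lemma norm_convex_combination_square_le:
  fixes q p :: "'a::real_inner"
  assumes "c1 \<ge> 0" "c2 \<ge> 0" "c1 + c2 = 1"
  shows "(norm (c1 *\<^sub>R q + c2 *\<^sub>R p))\<^sup>2 \<le> c1 * (norm q)\<^sup>2 + c2 * (norm p)\<^sup>2"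
proof -
  have "c1 * (norm q)\<^sup>2 + c2 * (norm p)\<^sup>2 - (norm (c1 *\<^sub>R q + c2 *\<^sub>R p))\<^sup>2
        = c1 * c2 * (norm (q - p))\<^sup>2"
    unfolding power2_norm_eq_inner eq_diff_eq[THEN iffD2, OF assms(3)]
    by (simp add: inner_simps algebra_simps inner_commute power2_eq_square)
  moreover have "c1 * c2 * (norm (q - p))\<^sup>2 \<ge> 0" using assms by simp
  ultimately show ?thesis by linarith
qed

lemma convex_combination_minus:
  fixes x y w :: "'a::real_vector"
  assumes "c1 + c2 = 1"
  shows "c1 *\<^sub>R x + c2 *\<^sub>R y - w = c1 *\<^sub>R (x - w) + c2 *\<^sub>R (y - w)"
proof -
  have "c1 *\<^sub>R (x - w) + c2 *\<^sub>R (y - w) = c1 *\<^sub>R x + c2 *\<^sub>R y - (c1 + c2) *\<^sub>R w"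
    by (simp add: algebra_simps)
  with assms show ?thesis by simp
qed

lemma quadratic_gap_at_minimiser:
  fixes q s v t :: "'a::real_inner"
  assumes "(b + c) *\<^sub>R t = b *\<^sub>R q - a *\<^sub>R v"
  shows "b/2 * (norm (s - q))\<^sup>2 + a * inner v s + c/2 * (norm s)\<^sup>2
       - (b/2 * (norm (t - q))\<^sup>2 + a * inner v t + c/2 * (norm t)\<^sup>2)
       = (b + c)/2 * (norm (s - t))\<^sup>2"
proof -
  have "b/2 * (norm (s - q))\<^sup>2 + a * inner v s + c/2 * (norm s)\<^sup>2
       - (b/2 * (norm (t - q))\<^sup>2 + a * inner v t + c/2 * (norm t)\<^sup>2)
       - (b + c)/2 * (norm (s - t))\<^sup>2 = inner ((b + c) *\<^sub>R t - b *\<^sub>R q + a *\<^sub>R v) (s - t)"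
    unfolding power2_norm_eq_inner
    by (simp add: inner_simps algebra_simps inner_commute) (simp add: field_simps)
  with assms show ?thesis by simp
qed

lemma quadratic_min_value:
  fixes q v t :: "'a::real_inner"
  assumes D: "D = b + \<mu> * a" "D > 0" and t: "D *\<^sub>R t = b *\<^sub>R q - a *\<^sub>R v"
  shows "2 * D * (b/2 * (norm (t - q))\<^sup>2 + a * inner v t + a * \<mu>/2 * (norm t)\<^sup>2)
       = \<mu> * a * b * (norm q)\<^sup>2 + 2 * a * b * inner q v - a\<^sup>2 * (norm v)\<^sup>2"
proof -
  define Q V R where "Q = (norm q)\<^sup>2" and "V = (norm v)\<^sup>2" and "R = inner q v"
  have tq: "D *\<^sub>R (t - q) = (- (\<mu> * a)) *\<^sub>R q - a *\<^sub>R v"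
    using t unfolding D by (simp add: algebra_simps)
  have n1: "D\<^sup>2 * (norm (t - q))\<^sup>2 = \<mu>\<^sup>2 * a\<^sup>2 * Q + 2 * \<mu> * a\<^sup>2 * R + a\<^sup>2 * V"
  proof -
    have "D\<^sup>2 * (norm (t - q))\<^sup>2 = (norm (D *\<^sub>R (t - q)))\<^sup>2" by (simp add: power_mult_distrib)
    also have "\<dots> = \<mu>\<^sup>2 * a\<^sup>2 * Q + 2 * \<mu> * a\<^sup>2 * R + a\<^sup>2 * V"
      unfolding tq Q_def R_def V_def power2_norm_eq_inner
      by (simp add: inner_simps inner_commute power2_eq_square algebra_simps)
    finally show ?thesis .
  qed
  have n2: "D\<^sup>2 * (norm t)\<^sup>2 = b\<^sup>2 * Q - 2 * a * b * R + a\<^sup>2 * V"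
  proof -
    have "D\<^sup>2 * (norm t)\<^sup>2 = (norm (D *\<^sub>R t))\<^sup>2" by (simp add: power_mult_distrib)
    also have "\<dots> = b\<^sup>2 * Q - 2 * a * b * R + a\<^sup>2 * V"
      unfolding t Q_def R_def V_def power2_norm_eq_inner
      by (simp add: inner_simps inner_commute power2_eq_square algebra_simps)
    finally show ?thesis .
  qed
  have n3: "D * inner v t = b * R - a * V"
  proof -
    have "D * inner v t = inner v (D *\<^sub>R t)" by simp
    also have "\<dots> = b * R - a * V" unfolding t R_def V_def power2_norm_eq_inner
      by (simp add: inner_simps inner_commute)
    finally show ?thesis .
  qed
  have "2 * D * (b/2 * (norm (t - q))\<^sup>2 + a * inner v t + a * \<mu>/2 * (norm t)\<^sup>2)
      = (b * (D\<^sup>2 * (norm (t - q))\<^sup>2) + 2 * a * D * (D * inner v t) + a * \<mu> * (D\<^sup>2 * (norm t)\<^sup>2)) / D"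
    using D by (simp add: field_simps power2_eq_square)
  also have "\<dots> = (b * (\<mu>\<^sup>2 * a\<^sup>2 * Q + 2 * \<mu> * a\<^sup>2 * R + a\<^sup>2 * V) + 2 * a * D * (b * R - a * V)
                  + a * \<mu> * (b\<^sup>2 * Q - 2 * a * b * R + a\<^sup>2 * V)) / D"
    unfolding n1 n2 n3 ..
  also have "\<dots> = (D * (\<mu> * a * b * Q + 2 * a * b * R - a\<^sup>2 * V)) / D"
    unfolding D(1) by (simp add: algebra_simps power2_eq_square)
  finally show ?thesis unfolding Q_def V_def R_def using D by simp
qed

lemma relative_error_triangle:
  fixes n1 n2 E r e s1 s2 :: real
  assumes "r > 0" "n2 \<ge> 0" "E \<ge> 0" "s1 \<ge> 0" "s2 \<ge> 0" "e \<ge> 0"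
    and err: "(n1 / r)\<^sup>2 + e \<le> s1\<^sup>2 * E\<^sup>2" and tri: "n2 \<le> n1 + s2 * r * E"
  shows "(n2 / r)\<^sup>2 + e \<le> (s1 + s2)\<^sup>2 * E\<^sup>2"
proof -
  have "(n1 / r)\<^sup>2 \<le> (s1 * E)\<^sup>2"
    using err \<open>e \<ge> 0\<close> unfolding power_mult_distrib by linarith
  from power2_le_imp_le[OF this] have n1: "n1 / r \<le> s1 * E"
    using assms by simp
  have "n2 / r \<le> n1 / r + s2 * E"
    using tri \<open>r > 0\<close> by (simp add: divide_le_eq algebra_simps)
  hence "(n2 / r)\<^sup>2 \<le> (n1 / r + s2 * E)\<^sup>2"
    using assms by (intro power_mono) simp_all
  also have "\<dots> = (n1 / r)\<^sup>2 + 2 * (n1 / r) * (s2 * E) + (s2 * E)\<^sup>2"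
    by (simp add: power2_sum)
  also have "\<dots> \<le> (n1 / r)\<^sup>2 + 2 * (s1 * E) * (s2 * E) + (s2 * E)\<^sup>2"
    using mult_right_mono[OF n1, of "2 * s2 * E"] assms by (simp add: algebra_simps)
  finally show ?thesis using err by (simp add: power2_eq_square algebra_simps)
qed

section \<open>Strongly convex extended-real functions\<close>

lemma derivative_bound_from_strong_chord:
  fixes phi :: "real \<Rightarrow> real"
  assumes deriv: "(phi has_real_derivative D) (at 0)"
    and chord: "\<And>t. 0 < t \<Longrightarrow> t < 1 \<Longrightarrow> phi t \<le> t * phi 1 + (1 - t) * phi 0 - c * t * (1 - t)"
  shows "phi 0 + D + c \<le> phi 1"
proof -
  have "((\<lambda>t. (phi t - phi 0) / (t - 0)) \<longlongrightarrow> D) (at 0)"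
    using deriv by (simp add: has_field_derivative_iff)
  hence quotient: "((\<lambda>t. (phi t - phi 0) / (t - 0)) \<longlongrightarrow> D) (at_right 0)"
    by (rule tendsto_mono[OF at_le, rotated]) simp
  have bound: "((\<lambda>t. phi 1 - phi 0 - c * (1 - t)) \<longlongrightarrow> phi 1 - phi 0 - c * (1 - 0)) (at_right 0)"
    by (intro tendsto_intros)
  have "\<forall>\<^sub>F t in at_right 0. (phi t - phi 0) / (t - 0) \<le> phi 1 - phi 0 - c * (1 - t)"
  proof (rule eventually_mono[OF eventually_at_right_real[of 0 "1::real"]])
    fix t :: real assume "t \<in> {0<..<1}"
    hence "0 < t" "t < 1" by auto
    with chord have "phi t - phi 0 \<le> t * (phi 1 - phi 0 - c * (1 - t))"
      by (fastforce simp: algebra_simps)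
    with \<open>0 < t\<close> show "(phi t - phi 0) / (t - 0) \<le> phi 1 - phi 0 - c * (1 - t)"
      by (simp add: pos_divide_le_eq mult.commute)
  qed simp
  from tendsto_le[OF _ bound quotient this] show ?thesis by simp
qed

lemma strongly_convex_fun_gradient_ineq:
  fixes g :: "'a::real_inner \<Rightarrow> ereal"
  assumes sc: "strongly_convex_fun \<mu> g" and not_minf: "\<And>x. g x \<noteq> -\<infinity>"
    and gz: "g z \<noteq> \<infinity>" and gw: "g w \<noteq> \<infinity>"
    and deriv: "((\<lambda>w. real_of_ereal (g w)) has_derivative (\<lambda>d. inner G d)) (at z)"
  shows "real_of_ereal (g z) + inner G (w - z) + \<mu>/2 * (norm (w - z))\<^sup>2 \<le> real_of_ereal (g w)"
proof -
  define phi where "phi t = real_of_ereal (g (z + t *\<^sub>R (w - z)))" for t :: real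
  have line: "((\<lambda>t. z + t *\<^sub>R (w - z)) has_derivative (\<lambda>t. t *\<^sub>R (w - z))) (at 0)"
    by (auto intro!: derivative_eq_intros)
  have "((\<lambda>w. real_of_ereal (g w)) has_derivative (\<lambda>d. inner G d)) (at ((\<lambda>t. z + t *\<^sub>R (w - z)) 0))"
    using deriv by simp
  from diff_chain_at[OF line this]
  have "(phi has_derivative (\<lambda>t. inner G (t *\<^sub>R (w - z)))) (at 0)"
    unfolding phi_def o_def .
  hence "(phi has_real_derivative inner G (w - z)) (at 0)"
    by (simp add: has_field_derivative_def mult.commute[of _ "inner G (w - z)"])
  moreover have "phi t \<le> t * phi 1 + (1 - t) * phi 0 - \<mu>/2 * (norm (w - z))\<^sup>2 * t * (1 - t)"
    if "0 < t" "t < 1" for t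
  proof -
    have "g (t *\<^sub>R w + (1 - t) *\<^sub>R z) \<le> ereal t * g w + ereal (1 - t) * g z
         - ereal (\<mu> / 2 * t * (1 - t) * (norm (w - z))\<^sup>2)"
      using sc that unfolding strongly_convex_fun_def by blast
    moreover have "z + t *\<^sub>R (w - z) = t *\<^sub>R w + (1 - t) *\<^sub>R z"
      by (simp add: algebra_simps)
    ultimately show ?thesis
      using gz gw not_minf[of w] not_minf[of z] not_minf[of "z + t *\<^sub>R (w - z)"]
      unfolding phi_def
      by (cases "g w"; cases "g z"; cases "g (z + t *\<^sub>R (w - z))") (auto simp: algebra_simps)
  qed
  ultimately have "phi 0 + inner G (w - z) + \<mu>/2 * (norm (w - z))\<^sup>2 \<le> phi 1"
    by (rule derivative_bound_from_strong_chord)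
  thus ?thesis unfolding phi_def by simp
qed

lemma strongly_convex_sum_quadratic_growth:
  fixes f g :: "'a::real_normed_vector \<Rightarrow> ereal"
  assumes cf: "convex_fun f" and sc: "strongly_convex_fun \<mu> g"
    and min: "\<forall>z. f x + g x \<le> f z + g z"
    and finite: "\<bar>f x\<bar> \<noteq> \<infinity>" "\<bar>g x\<bar> \<noteq> \<infinity>" "\<bar>f y\<bar> \<noteq> \<infinity>" "\<bar>g y\<bar> \<noteq> \<infinity>"
  shows "\<mu>/2 * (norm (y - x))\<^sup>2
           \<le> real_of_ereal (f y) + real_of_ereal (g y) - (real_of_ereal (f x) + real_of_ereal (g x))"
proof (rule field_le_mult_one_interval)
  fix s :: real assume "0 < s" "s < 1"
  define t where "t = 1 - s"
  have t: "0 < t" "t < 1" using \<open>0 < s\<close> \<open>s < 1\<close> unfolding t_def by auto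
  define m where "m = t *\<^sub>R y + (1 - t) *\<^sub>R x"
  have "f m \<le> ereal t * f y + ereal (1 - t) * f x"
    using cf t unfolding convex_fun_def m_def by blast
  moreover have "g m \<le> ereal t * g y + ereal (1 - t) * g x
                   - ereal (\<mu> / 2 * t * (1 - t) * (norm (y - x))\<^sup>2)"
    using sc t unfolding strongly_convex_fun_def m_def by blast
  ultimately have "f x + g x \<le> ereal t * f y + ereal (1 - t) * f x
        + (ereal t * g y + ereal (1 - t) * g x - ereal (\<mu> / 2 * t * (1 - t) * (norm (y - x))\<^sup>2))"
    using min add_mono order_trans by blast
  moreover obtain fx gx fy gy where "f x = ereal fx" "g x = ereal gx" "f y = ereal fy" "g y = ereal gy"
    using finite by (cases "f x"; cases "g x"; cases "f y"; cases "g y") auto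
  ultimately have "t * (\<mu>/2 * (1 - t) * (norm (y - x))\<^sup>2) \<le> t * (fy + gy - (fx + gx))"
    by (simp add: algebra_simps)
  hence "\<mu>/2 * (1 - t) * (norm (y - x))\<^sup>2 \<le> fy + gy - (fx + gx)"
    using t by (simp add: mult_le_cancel_left)
  with \<open>f x = ereal fx\<close> \<open>g x = ereal gx\<close> \<open>f y = ereal fy\<close> \<open>g y = ereal gy\<close>
  show "s * (\<mu>/2 * (norm (y - x))\<^sup>2)
      \<le> real_of_ereal (f y) + real_of_ereal (g y) - (real_of_ereal (f x) + real_of_ereal (g x))"
    unfolding t_def by (simp add: algebra_simps)
qed

section \<open>Step size and weights\<close>

lemma stepsize_characterisation:
  fixes L \<mu> s lam :: real
  assumes "L > 0" "\<mu> \<ge> 0" "s > 0"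
    and lam: "lam = s / (sqrt ((s * \<mu> / 2)\<^sup>2 + L\<^sup>2) - s * \<mu> / 2)"
  shows "lam > 0" "(lam * L)\<^sup>2 = s\<^sup>2 * (1 + lam * \<mu>)"
proof -
  define c where "c = s * \<mu> / 2"
  define S where "S = sqrt (c\<^sup>2 + L\<^sup>2)"
  have "c \<ge> 0" unfolding c_def using assms by simp
  have S2: "S\<^sup>2 = c\<^sup>2 + L\<^sup>2" unfolding S_def by simp
  have "c < S"
    unfolding S_def using \<open>c \<ge> 0\<close> \<open>L > 0\<close> by (simp add: real_less_rsqrt)
  have lam_S: "lam * (S - c) = s" using lam \<open>c < S\<close> unfolding S_def c_def by simp
  show "lam > 0" using lam \<open>c < S\<close> \<open>s > 0\<close> unfolding S_def c_def by simp
  have "(lam * L)\<^sup>2 = lam\<^sup>2 * (S\<^sup>2 - c\<^sup>2)" using S2 by (simp add: power_mult_distrib)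
  also have "\<dots> = lam * (S - c) * (lam * (S - c) + 2 * c * lam)"
    by (simp add: power2_eq_square algebra_simps)
  also have "\<dots> = s * (s + 2 * c * lam)" by (simp only: lam_S)
  also have "\<dots> = s\<^sup>2 * (1 + lam * \<mu>)"
    unfolding c_def by (simp add: power2_eq_square algebra_simps)
  finally show "(lam * L)\<^sup>2 = s\<^sup>2 * (1 + lam * \<mu>)" .
qed

context
  fixes L \<mu> s lam :: real
  assumes pos: "L > 0" "\<mu> \<ge> 0" "s > 0" "lam > 0"
    and lam_eq: "(lam * L)\<^sup>2 = s\<^sup>2 * (1 + lam * \<mu>)"
begin

lemma stepsize_times_L: "lam * L = s * sqrt (1 + lam * \<mu>)"
proof -
  have "lam * L = sqrt ((lam * L)\<^sup>2)" using pos by simp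
  also have "\<dots> = s * sqrt (1 + lam * \<mu>)" unfolding lam_eq using pos by (simp add: real_sqrt_mult)
  finally show ?thesis .
qed

lemma stepsize_ge: "s / L \<le> lam"
proof -
  have "1 \<le> sqrt (1 + lam * \<mu>)" using pos by simp
  hence "s \<le> lam * L" unfolding stepsize_times_L using pos by simp
  thus ?thesis using pos by (simp add: divide_le_eq)
qed

lemma stepsize_factor_le:
  assumes "s \<le> 1" "\<mu> \<le> L"
  shows "1 + lam * \<mu> \<le> 4 * (1 + s * \<mu> / L)"
proof -
  define w where "w = lam * L / s"
  define m where "m = s * \<mu> / L"
  have "s * \<mu> \<le> 1 * L" using assms pos by (intro mult_mono) auto
  hence "m \<le> 1" unfolding m_def using pos by (simp add: divide_le_eq)
  have "m \<ge> 0" "w \<ge> 0" unfolding m_def w_def using pos by simp_all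
  have lam_mu: "lam * \<mu> = w * m" unfolding w_def m_def using pos by simp
  have "w\<^sup>2 = 1 + lam * \<mu>" unfolding w_def using lam_eq pos by (simp add: power_divide)
  hence ww: "w * w = 1 + w * m" by (simp add: lam_mu power2_eq_square)
  have "w * m \<le> w" using \<open>m \<le> 1\<close> \<open>w \<ge> 0\<close> by (rule mult_left_le)
  have "w \<le> 2"
  proof (rule ccontr)
    assume "\<not> w \<le> 2"
    hence "2 * w < w * w" by (simp add: mult_strict_right_mono)
    with ww \<open>w * m \<le> w\<close> \<open>\<not> w \<le> 2\<close> show False by linarith
  qed
  hence "w * m \<le> 2 * m" using \<open>m \<ge> 0\<close> by (rule mult_right_mono)
  thus ?thesis unfolding lam_mu m_def[symmetric] using \<open>m \<ge> 0\<close> by simp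
qed

lemma stepsize_ratio_ge:
  assumes "\<mu> \<le> L"
  shows "s * \<mu> / ((1 + s) * L) \<le> lam * \<mu> / (1 + lam * \<mu>)"
proof -
  have "s \<le> lam * L" using stepsize_ge pos by (simp add: divide_le_eq)
  moreover have "s * lam * \<mu> \<le> s * lam * L" using assms pos by simp
  ultimately have "s * (1 + lam * \<mu>) \<le> lam * L * (1 + s)" by (simp add: algebra_simps)
  hence "s * (1 + lam * \<mu>) * \<mu> \<le> lam * L * (1 + s) * \<mu>" using pos by (simp add: mult_right_mono)
  moreover have "(1 + s) * L > 0" "1 + lam * \<mu> > 0" using pos by (simp_all add: add_pos_nonneg)
  ultimately show ?thesis
    by (simp add: divide_le_eq le_divide_eq) (simp add: algebra_simps)
qed

end

lemma quadratic_root_ge: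
  fixes a B C :: real
  assumes "B \<ge> 0" "C \<ge> 0" and a: "a = (B + sqrt (B\<^sup>2 + 4 * C)) / 2"
  shows "B \<le> a" "a\<^sup>2 = B * a + C"
proof -
  define r where "r = sqrt (B\<^sup>2 + 4 * C)"
  have "r\<^sup>2 = B\<^sup>2 + 4 * C" "B \<le> r" unfolding r_def using assms by (simp_all add: real_le_rsqrt)
  thus "B \<le> a" "a\<^sup>2 = B * a + C" unfolding a r_def[symmetric] by (simp_all add: power2_eq_square field_simps)
qed

lemma extrapolation_coefficients:
  fixes A a lam \<mu> :: real
  assumes "A \<ge> 0" "a > 0" "lam > 0" "\<mu> \<ge> 0"
    and root: "a\<^sup>2 = lam * (1 + 2 * \<mu> * A) * a + lam * (1 + \<mu> * A) * A"
    and "\<mu> * A * lam \<le> a"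
  defines "c1 \<equiv> (a - \<mu> * A * lam) / (A + a)" and "c2 \<equiv> (A + \<mu> * A * lam) / (A + a)"
  shows "c1 \<ge> 0" "c2 \<ge> 0" "c1 + c2 = 1"
    and "a\<^sup>2 * c1 = lam * a * (1 + \<mu> * A)" "a\<^sup>2 * c2 = lam * A * (1 + \<mu> * (A + a))"
    and "a\<^sup>2 * (1 + lam * \<mu>) = lam * (A + a) * (1 + \<mu> * (A + a))"
proof -
  have "A + a > 0" using assms by simp
  thus "c1 \<ge> 0" "c2 \<ge> 0" "c1 + c2 = 1" unfolding c1_def c2_def using assms
    by (simp_all add: add_divide_distrib[symmetric])
  have key1: "a\<^sup>2 * (1 + lam * \<mu>) = lam * (A + a) * (1 + \<mu> * (A + a))"
  proof -
    have "a\<^sup>2 * (1 + lam * \<mu>) - lam * (A + a) * (1 + \<mu> * (A + a))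
        = a\<^sup>2 - (lam * (1 + 2 * \<mu> * A) * a + lam * (1 + \<mu> * A) * A)"
      by (simp add: algebra_simps power2_eq_square)
    with root show ?thesis by simp
  qed
  thus "a\<^sup>2 * (1 + lam * \<mu>) = lam * (A + a) * (1 + \<mu> * (A + a))" .
  have "a * (a - \<mu> * A * lam) - lam * (1 + \<mu> * A) * (A + a)
      = a\<^sup>2 - (lam * (1 + 2 * \<mu> * A) * a + lam * (1 + \<mu> * A) * A)"
    by (simp add: algebra_simps power2_eq_square)
  hence key2: "a * (a - \<mu> * A * lam) = lam * (1 + \<mu> * A) * (A + a)" using root by simp
  have "a\<^sup>2 * c1 = a * (a * (a - \<mu> * A * lam)) / (A + a)"
    unfolding c1_def by (simp add: power2_eq_square)
  also have "\<dots> = lam * a * (1 + \<mu> * A)" unfolding key2 using \<open>A + a > 0\<close> by simp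
  finally show "a\<^sup>2 * c1 = lam * a * (1 + \<mu> * A)" .
  have "a\<^sup>2 * c2 = A * (a\<^sup>2 * (1 + lam * \<mu>)) / (A + a)"
    unfolding c2_def by (simp add: field_simps)
  also have "\<dots> = lam * A * (1 + \<mu> * (A + a))" unfolding key1 using \<open>A + a > 0\<close> by simp
  finally show "a\<^sup>2 * c2 = lam * A * (1 + \<mu> * (A + a))" .
qed

lemma weight_growth:
  fixes A a lam \<mu> \<theta> :: real
  assumes "A \<ge> 0" "a > 0" "lam > 0" "\<mu> > 0" "\<theta> \<ge> 0"
    and root: "a\<^sup>2 = lam * (1 + 2 * \<mu> * A) * a + lam * (1 + \<mu> * A) * A"
    and \<theta>: "\<theta>\<^sup>2 \<le> lam * \<mu> / (1 + lam * \<mu>)"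
  shows "A \<le> (1 - \<theta>) * (A + a)"
proof -
  have pos: "1 + lam * \<mu> > 0" using assms by (simp add: add_pos_pos)
  have "a\<^sup>2 * (1 + lam * \<mu>) - lam * \<mu> * (A + a)\<^sup>2
      = a\<^sup>2 - (lam * (1 + 2 * \<mu> * A) * a + lam * (1 + \<mu> * A) * A) + lam * (A + a)"
    by (simp add: algebra_simps power2_eq_square)
  also have "\<dots> \<ge> 0" using root assms by simp
  finally have "lam * \<mu> * (A + a)\<^sup>2 / (1 + lam * \<mu>) \<le> a\<^sup>2"
    using pos by (simp add: pos_divide_le_eq)
  moreover have "\<theta>\<^sup>2 * (A + a)\<^sup>2 \<le> lam * \<mu> / (1 + lam * \<mu>) * (A + a)\<^sup>2"
    using mult_right_mono[OF \<theta> zero_le_power2] .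
  ultimately have "(\<theta> * (A + a))\<^sup>2 \<le> a\<^sup>2" unfolding power_mult_distrib by simp
  from power2_le_imp_le[OF this less_imp_le[OF \<open>a > 0\<close>]] have "\<theta> * (A + a) \<le> a" .
  thus ?thesis by (simp add: algebra_simps)
qed

lemma powr_three_halves: "x > 0 \<Longrightarrow> x powr (3 / 2) = x * sqrt (x::real)"
  using powr_add[of x 1 "1/2"] by (simp add: powr_half_sqrt)

section \<open>One iteration\<close>

lemma hpe_condition_expanded:
  fixes q p v :: "'a::real_inner"
  assumes "A \<ge> 0" "a > 0" "lam > 0" "\<mu> \<ge> 0"
    and root: "a\<^sup>2 = lam * (1 + 2 * \<mu> * A) * a + lam * (1 + \<mu> * A) * A"
    and "\<mu> * A * lam \<le> a"
    and hpe: "(norm (lam *\<^sub>R v - (((a - \<mu> * A * lam) / (A + a)) *\<^sub>R q + ((A + \<mu> * A * lam) / (A + a)) *\<^sub>R p)))\<^sup>2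
                / (1 + lam * \<mu>) + 2 * lam * \<epsilon>
              \<le> (norm (((a - \<mu> * A * lam) / (A + a)) *\<^sub>R q + ((A + \<mu> * A * lam) / (A + a)) *\<^sub>R p))\<^sup>2"
  shows "a\<^sup>2 * (norm v)\<^sup>2 - 2 * a * (1 + \<mu> * A) * inner q v - 2 * A * (1 + \<mu> * (A + a)) * inner v p
           + 2 * (A + a) * (1 + \<mu> * (A + a)) * \<epsilon>
         \<le> \<mu> * a * (1 + \<mu> * A) * (norm q)\<^sup>2 + \<mu> * A * (1 + \<mu> * (A + a)) * (norm p)\<^sup>2"
proof -
  define c1 c2 where "c1 = (a - \<mu> * A * lam) / (A + a)" and "c2 = (A + \<mu> * A * lam) / (A + a)"
  define E where "E = c1 *\<^sub>R q + c2 *\<^sub>R p"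
  define D b where "D = 1 + \<mu> * (A + a)" and "b = 1 + \<mu> * A"
  note coeffs = extrapolation_coefficients[OF assms(1-6), folded c1_def c2_def, folded D_def b_def]
  have pos: "1 + lam * \<mu> > 0" using assms by (simp add: add_pos_nonneg)
  have "(norm E)\<^sup>2 \<le> c1 * (norm q)\<^sup>2 + c2 * (norm p)\<^sup>2"
    unfolding E_def using coeffs(1-3) by (rule norm_convex_combination_square_le)
  hence "lam * \<mu> * (norm E)\<^sup>2 \<le> lam * \<mu> * (c1 * (norm q)\<^sup>2 + c2 * (norm p)\<^sup>2)"
    using assms by (simp add: mult_left_mono)
  moreover have "(norm (lam *\<^sub>R v - E))\<^sup>2 = lam\<^sup>2 * (norm v)\<^sup>2 - 2 * lam * (c1 * inner q v + c2 * inner v p) + (norm E)\<^sup>2"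
    unfolding E_def power2_norm_eq_inner by (simp add: inner_simps inner_commute power2_eq_square algebra_simps)
  moreover have "(norm (lam *\<^sub>R v - E))\<^sup>2 + 2 * lam * \<epsilon> * (1 + lam * \<mu>) \<le> (norm E)\<^sup>2 + lam * \<mu> * (norm E)\<^sup>2"
  proof -
    have "(norm (lam *\<^sub>R v - E))\<^sup>2 / (1 + lam * \<mu>) + 2 * lam * \<epsilon> \<le> (norm E)\<^sup>2"
      using hpe unfolding E_def c1_def c2_def .
    hence "(norm (lam *\<^sub>R v - E))\<^sup>2 / (1 + lam * \<mu>) \<le> (norm E)\<^sup>2 - 2 * lam * \<epsilon>" by linarith
    hence "(norm (lam *\<^sub>R v - E))\<^sup>2 \<le> ((norm E)\<^sup>2 - 2 * lam * \<epsilon>) * (1 + lam * \<mu>)"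
      using pos by (simp add: pos_divide_le_eq)
    thus ?thesis by (simp add: algebra_simps)
  qed
  ultimately have "lam\<^sup>2 * (norm v)\<^sup>2 - 2 * lam * (c1 * inner q v + c2 * inner v p) + 2 * lam * \<epsilon> * (1 + lam * \<mu>)
      \<le> lam * \<mu> * (c1 * (norm q)\<^sup>2 + c2 * (norm p)\<^sup>2)"
    by linarith
  hence "a\<^sup>2 * (lam\<^sup>2 * (norm v)\<^sup>2 - 2 * lam * (c1 * inner q v + c2 * inner v p) + 2 * lam * \<epsilon> * (1 + lam * \<mu>))
      \<le> a\<^sup>2 * (lam * \<mu> * (c1 * (norm q)\<^sup>2 + c2 * (norm p)\<^sup>2))"
    by (simp add: mult_left_mono)
  also have "a\<^sup>2 * (lam * \<mu> * (c1 * (norm q)\<^sup>2 + c2 * (norm p)\<^sup>2))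
      = lam\<^sup>2 * (\<mu> * a * b * (norm q)\<^sup>2 + \<mu> * A * D * (norm p)\<^sup>2)"
  proof -
    have "a\<^sup>2 * (lam * \<mu> * (c1 * (norm q)\<^sup>2 + c2 * (norm p)\<^sup>2))
        = lam * \<mu> * ((a\<^sup>2 * c1) * (norm q)\<^sup>2 + (a\<^sup>2 * c2) * (norm p)\<^sup>2)"
      by (simp add: algebra_simps)
    thus ?thesis unfolding coeffs(4,5) by (simp add: algebra_simps power2_eq_square)
  qed
  also have "a\<^sup>2 * (lam\<^sup>2 * (norm v)\<^sup>2 - 2 * lam * (c1 * inner q v + c2 * inner v p) + 2 * lam * \<epsilon> * (1 + lam * \<mu>))
      = lam\<^sup>2 * (a\<^sup>2 * (norm v)\<^sup>2 - 2 * a * b * inner q v - 2 * A * D * inner v p + 2 * (A + a) * D * \<epsilon>)"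
  proof -
    have "a\<^sup>2 * (lam\<^sup>2 * (norm v)\<^sup>2 - 2 * lam * (c1 * inner q v + c2 * inner v p) + 2 * lam * \<epsilon> * (1 + lam * \<mu>))
        = lam\<^sup>2 * a\<^sup>2 * (norm v)\<^sup>2 - 2 * lam * ((a\<^sup>2 * c1) * inner q v + (a\<^sup>2 * c2) * inner v p)
          + 2 * lam * \<epsilon> * (a\<^sup>2 * (1 + lam * \<mu>))"
      by (simp add: algebra_simps)
    thus ?thesis unfolding coeffs(4-6) by (simp add: algebra_simps power2_eq_square)
  qed
  finally show ?thesis unfolding D_def b_def using \<open>lam > 0\<close> by (simp add: mult_le_cancel_left)
qed

text \<open>\<open>x'\<close> minimises the model
  \<open>w \<mapsto> (1 + \<mu> * A)/2 * \<parallel>w - x\<parallel>\<^sup>2 + a * (\<langle>v, w - y'\<rangle> + \<mu>/2 * \<parallel>w - y'\<parallel>\<^sup>2)\<close>, whose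
  minimum the relative-error criterion bounds below by \<open>(A + a) * \<epsilon>\<close>.\<close>
lemma potential_step:
  fixes x y x' y' z v :: "'a::real_inner"
  assumes "A \<ge> 0" "a > 0" "lam > 0" "\<mu> \<ge> 0"
    and root: "a\<^sup>2 = lam * (1 + 2 * \<mu> * A) * a + lam * (1 + \<mu> * A) * A"
    and "\<mu> * A * lam \<le> a"
    and x': "(1 + \<mu> * (A + a)) *\<^sub>R x' = (1 + \<mu> * A) *\<^sub>R x + (\<mu> * a) *\<^sub>R y' - a *\<^sub>R v"
    and xt: "xt = ((a - \<mu> * A * lam) / (A + a)) *\<^sub>R x + ((A + \<mu> * A * lam) / (A + a)) *\<^sub>R y"
    and hpe: "(norm (lam *\<^sub>R v + y' - xt))\<^sup>2 / (1 + lam * \<mu>) + 2 * lam * \<epsilon> \<le> (norm (y' - xt))\<^sup>2"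
    and sub_z: "H' + inner v (z - y') - \<epsilon> + \<mu>/2 * (norm (z - y'))\<^sup>2 \<le> Hz"
    and sub_y: "A * (H' + inner v (y - y') - \<epsilon> + \<mu>/2 * (norm (y - y'))\<^sup>2) \<le> A * Hy"
  shows "(A + a) * (H' - Hz) + (1 + \<mu> * (A + a))/2 * (norm (x' - z))\<^sup>2
           \<le> A * (Hy - Hz) + (1 + \<mu> * A)/2 * (norm (x - z))\<^sup>2"
proof -
  define q p s t where "q = x - y'" and "p = y - y'" and "s = z - y'" and "t = x' - y'"
  define D b where "D = 1 + \<mu> * (A + a)" and "b = 1 + \<mu> * A"
  define M where "M = b/2 * (norm (t - q))\<^sup>2 + a * inner v t + a * \<mu>/2 * (norm t)\<^sup>2"
  have "D > 0" unfolding D_def using assms by (simp add: add_pos_nonneg)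
  have t: "D *\<^sub>R t = b *\<^sub>R q - a *\<^sub>R v"
    using x' unfolding D_def b_def q_def t_def by (simp add: algebra_simps)
  have gap: "b/2 * (norm (s - q))\<^sup>2 + a * inner v s + a * \<mu>/2 * (norm s)\<^sup>2 - M = D/2 * (norm (s - t))\<^sup>2"
    using quadratic_gap_at_minimiser[of b "a * \<mu>" t q a v s] t
    unfolding M_def D_def b_def by (simp add: algebra_simps)
  have "xt - y' = ((a - \<mu> * A * lam) / (A + a)) *\<^sub>R q + ((A + \<mu> * A * lam) / (A + a)) *\<^sub>R p"
    unfolding xt q_def p_def by (rule convex_combination_minus[OF extrapolation_coefficients(3)[OF assms(1-6)]])
  hence "norm (lam *\<^sub>R v + y' - xt) = norm (lam *\<^sub>R v - (((a - \<mu> * A * lam) / (A + a)) *\<^sub>R q + ((A + \<mu> * A * lam) / (A + a)) *\<^sub>R p))"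
    "norm (y' - xt) = norm (((a - \<mu> * A * lam) / (A + a)) *\<^sub>R q + ((A + \<mu> * A * lam) / (A + a)) *\<^sub>R p)"
    by (metis add_diff_eq diff_diff_eq2, metis norm_minus_commute)
  have "a\<^sup>2 * (norm v)\<^sup>2 - 2 * a * b * inner q v - 2 * A * D * inner v p + 2 * (A + a) * D * \<epsilon>
         \<le> \<mu> * a * b * (norm q)\<^sup>2 + \<mu> * A * D * (norm p)\<^sup>2"
    unfolding D_def b_def
    using hpe by (intro hpe_condition_expanded[OF assms(1-6)]) (simp only: \<open>norm (lam *\<^sub>R v + y' - xt) = _\<close> \<open>norm (y' - xt) = _\<close>)
  moreover have "2 * D * M = \<mu> * a * b * (norm q)\<^sup>2 + 2 * a * b * inner q v - a\<^sup>2 * (norm v)\<^sup>2"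
    unfolding M_def using t \<open>D > 0\<close> by (intro quadratic_min_value) (simp_all add: D_def b_def algebra_simps)
  ultimately have "2 * D * ((A + a) * \<epsilon>) \<le> 2 * D * (M + A * inner v p + \<mu> * A/2 * (norm p)\<^sup>2)"
    by (simp add: algebra_simps)
  hence "(A + a) * \<epsilon> \<le> M + A * inner v p + \<mu> * A/2 * (norm p)\<^sup>2"
    using \<open>D > 0\<close> by simp
  moreover have "a * (H' + inner v s - \<epsilon> + \<mu>/2 * (norm s)\<^sup>2) \<le> a * Hz"
    using sub_z \<open>a > 0\<close> unfolding s_def by simp
  moreover have "norm (x' - z) = norm (t - s)" "norm (x - z) = norm (q - s)"
    unfolding q_def s_def t_def by (simp_all add: algebra_simps)
  ultimately show ?thesis using gap sub_y unfolding D_def[symmetric] b_def[symmetric] p_def[symmetric] s_def[symmetric]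
    by (simp add: algebra_simps norm_minus_commute)
qed

section \<open>Linear convergence of the method\<close>

locale inexact_accelerated_pg =
  fixes f g :: "'a::euclidean_space \<Rightarrow> ereal"
    and G :: "'a \<Rightarrow> 'a"
    and \<Omega> :: "'a set"
    and \<mu> L \<sigma>h \<sigma>u lam :: real
    and x y xt u v :: "nat \<Rightarrow> 'a"
    and \<epsilon> a A :: "nat \<Rightarrow> real"
    and xstar :: 'a
  assumes f_proper: "proper_fun f" and f_convex: "convex_fun f" and g_proper: "proper_fun g"
    and h_dom: "edom (\<lambda>z. f z + g z) \<noteq> {}"
    and mu_pos: "\<mu> > 0" and g_strong: "strongly_convex_fun \<mu> g"
    and Omega_ne: "\<Omega> \<noteq> {}" and Omega_closed: "closed \<Omega>" and Omega_convex: "convex \<Omega>"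
    and dom_f: "edom f \<subseteq> \<Omega>"
    and g_diff: "\<exists>U. open U \<and> \<Omega> \<subseteq> U \<and> (\<forall>z\<in>U. g z \<noteq> \<infinity> \<and>
                    ((\<lambda>w. real_of_ereal (g w)) has_derivative (\<lambda>d. inner (G z) d)) (at z))"
    and L_pos: "L > 0"
    and G_lip: "\<forall>z\<in>\<Omega>. \<forall>w\<in>\<Omega>. norm (G z - G w) \<le> L * norm (z - w)"
    and L_ge_mu: "L \<ge> \<mu>"
    and sh: "\<sigma>h \<ge> 0" and su: "0 < \<sigma>u" "\<sigma>u \<le> 1" and ssum: "\<sigma>u + \<sigma>h < 1"
    and lam_def: "lam = \<sigma>u / (sqrt ((\<sigma>u * \<mu> / 2)\<^sup>2 + L\<^sup>2) - \<sigma>u * \<mu> / 2)"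
    and A0: "A 0 = 0"
    and a_def: "\<And>k. a (Suc k) = ((1 + 2 * \<mu> * A k) * lam
                  + sqrt (((1 + 2 * \<mu> * A k))\<^sup>2 * lam\<^sup>2 + 4 * (1 + \<mu> * A k) * A k * lam)) / 2"
    and xt_def: "\<And>k. xt k = ((a (Suc k) - \<mu> * A k * lam) / (A k + a (Suc k))) *\<^sub>R x k
                  + ((A k + \<mu> * A k * lam) / (A k + a (Suc k))) *\<^sub>R y k"
    and PG: "\<And>k. approx_PG_sol f G \<Omega> \<mu> \<sigma>h (xt k) lam (y (Suc k)) (u (Suc k)) (\<epsilon> (Suc k))"
    and A_Suc: "\<And>k. A (Suc k) = A k + a (Suc k)"
    and v_def: "\<And>k. v (Suc k) = u (Suc k) + G (y (Suc k))"
    and x_Suc: "\<And>k. x (Suc k) = ((1 + \<mu> * A k) / (1 + \<mu> * A (Suc k))) *\<^sub>R x k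
                  + (\<mu> * a (Suc k) / (1 + \<mu> * A (Suc k))) *\<^sub>R y (Suc k)
                  - (a (Suc k) / (1 + \<mu> * A (Suc k))) *\<^sub>R v (Suc k)"
    and xstar_min: "\<forall>z. f xstar + g xstar \<le> f z + g z"
begin

lemma f_not_minf: "f w \<noteq> -\<infinity>" and g_not_minf: "g w \<noteq> -\<infinity>"
  using f_proper g_proper unfolding proper_fun_def by blast+

lemma in_Omega_if_f_finite: "f w \<noteq> \<infinity> \<Longrightarrow> w \<in> \<Omega>"
  using dom_f unfolding edom_def by (auto simp: less_le)

lemma g_finite_on_Omega: "w \<in> \<Omega> \<Longrightarrow> g w \<noteq> \<infinity>"
  and g_derivative_on_Omega:
    "w \<in> \<Omega> \<Longrightarrow> ((\<lambda>w. real_of_ereal (g w)) has_derivative (\<lambda>d. inner (G w) d)) (at w)"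
  using g_diff by blast+

lemma PG_solution:
  "\<epsilon> (Suc k) \<ge> 0" "u (Suc k) \<in> eps_subdiff f (\<epsilon> (Suc k)) (y (Suc k))"
  "(norm (lam *\<^sub>R (u (Suc k) + G (closest_point \<Omega> (xt k))) + y (Suc k) - xt k))\<^sup>2 / (1 + lam * \<mu>)
     + 2 * lam * \<epsilon> (Suc k) \<le> \<sigma>h\<^sup>2 * (norm (y (Suc k) - xt k))\<^sup>2"
  using PG[of k] unfolding approx_PG_sol_def Let_def by blast+

lemma finite_at_minimiser: "f xstar \<noteq> \<infinity>" "g xstar \<noteq> \<infinity>"
proof -
  obtain w where "f w + g w < \<infinity>" using h_dom unfolding edom_def by blast
  hence "f xstar + g xstar < \<infinity>" using xstar_min by (meson le_less_trans)
  thus "f xstar \<noteq> \<infinity>" using g_not_minf by auto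
  thus "g xstar \<noteq> \<infinity>" using g_finite_on_Omega in_Omega_if_f_finite by blast
qed

lemma f_finite_at_iterate: "f (y (Suc k)) \<noteq> \<infinity>"
proof
  assume "f (y (Suc k)) = \<infinity>"
  moreover have "f (y (Suc k)) + ereal (inner (u (Suc k)) (xstar - y (Suc k)) - \<epsilon> (Suc k)) \<le> f xstar"
    using PG_solution(2)[of k] unfolding eps_subdiff_def by blast
  ultimately show False using finite_at_minimiser by simp
qed

lemma iterate_in_Omega: "y (Suc k) \<in> \<Omega>"
  using f_finite_at_iterate in_Omega_if_f_finite by blast

text \<open>\<open>real_of_ereal\<close> maps \<open>\<infinity>\<close> to \<open>0\<close>, so \<open>hval\<close> is the objective only where \<open>f\<close> is
  finite, as it is at \<open>xstar\<close> and at every \<open>y (Suc k)\<close>.\<close>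
definition hval :: "'a \<Rightarrow> real" where
  "hval w = real_of_ereal (f w) + real_of_ereal (g w)"

lemma hval_gap:
  assumes "f w \<noteq> \<infinity>"
  shows "(f w + g w) - (f xstar + g xstar) = ereal (hval w - hval xstar)"
  using assms finite_at_minimiser f_not_minf g_not_minf g_finite_on_Omega[OF in_Omega_if_f_finite[OF assms]]
  unfolding hval_def
  by (cases "f w"; cases "g w"; cases "f xstar"; cases "g xstar") auto

lemma approx_subgradient_ineq:
  assumes "f w \<noteq> \<infinity>"
  shows "hval (y (Suc k)) + inner (v (Suc k)) (w - y (Suc k)) - \<epsilon> (Suc k)
           + \<mu>/2 * (norm (w - y (Suc k)))\<^sup>2 \<le> hval w"
proof -
  have "f (y (Suc k)) + ereal (inner (u (Suc k)) (w - y (Suc k)) - \<epsilon> (Suc k)) \<le> f w"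
    using PG_solution(2)[of k] unfolding eps_subdiff_def by blast
  hence "real_of_ereal (f (y (Suc k))) + (inner (u (Suc k)) (w - y (Suc k)) - \<epsilon> (Suc k))
           \<le> real_of_ereal (f w)"
    using assms f_finite_at_iterate[of k] f_not_minf[of w] f_not_minf[of "y (Suc k)"]
    by (cases "f w"; cases "f (y (Suc k))") auto
  moreover have "real_of_ereal (g (y (Suc k))) + inner (G (y (Suc k))) (w - y (Suc k))
      + \<mu>/2 * (norm (w - y (Suc k)))\<^sup>2 \<le> real_of_ereal (g w)"
    using iterate_in_Omega in_Omega_if_f_finite[OF assms]
    by (intro strongly_convex_fun_gradient_ineq[OF g_strong g_not_minf])
       (simp_all add: g_finite_on_Omega g_derivative_on_Omega)
  ultimately show ?thesis unfolding hval_def v_def inner_add_left by linarith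
qed

lemma lam_pos: "lam > 0" and lam_eq: "(lam * L)\<^sup>2 = \<sigma>u\<^sup>2 * (1 + lam * \<mu>)"
  using stepsize_characterisation[OF L_pos less_imp_le[OF mu_pos] su(1) lam_def] by blast+

lemmas lam_times_L = stepsize_times_L[OF L_pos less_imp_le[OF mu_pos] su(1) lam_pos lam_eq]
  and lam_ge = stepsize_ge[OF L_pos less_imp_le[OF mu_pos] su(1) lam_pos lam_eq]
  and lam_factor_le = stepsize_factor_le[OF L_pos less_imp_le[OF mu_pos] su(1) lam_pos lam_eq su(2) L_ge_mu]
  and lam_ratio_ge = stepsize_ratio_ge[OF L_pos less_imp_le[OF mu_pos] su(1) lam_pos lam_eq L_ge_mu]

lemma weight_root:
  assumes "A k \<ge> 0"
  shows "(1 + 2 * \<mu> * A k) * lam \<le> a (Suc k)"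
    "(a (Suc k))\<^sup>2 = lam * (1 + 2 * \<mu> * A k) * a (Suc k) + lam * (1 + \<mu> * A k) * A k"
proof -
  have "a (Suc k) = ((1 + 2 * \<mu> * A k) * lam
      + sqrt (((1 + 2 * \<mu> * A k) * lam)\<^sup>2 + 4 * ((1 + \<mu> * A k) * A k * lam))) / 2"
    unfolding a_def by (simp add: power_mult_distrib mult.assoc)
  from quadratic_root_ge[OF _ _ this] assms mu_pos lam_pos
  show "(1 + 2 * \<mu> * A k) * lam \<le> a (Suc k)"
    "(a (Suc k))\<^sup>2 = lam * (1 + 2 * \<mu> * A k) * a (Suc k) + lam * (1 + \<mu> * A k) * A k"
    by (simp_all add: algebra_simps)
qed

lemma A_nonneg: "A k \<ge> 0"
proof (induction k)
  case (Suc k)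
  have "0 \<le> (1 + 2 * \<mu> * A k) * lam" using Suc mu_pos lam_pos by simp
  with weight_root(1)[OF Suc] Suc show ?case unfolding A_Suc by linarith
qed (simp add: A0)

lemma a_pos: "a (Suc k) > 0"
proof -
  have "0 < (1 + 2 * \<mu> * A k) * lam" using A_nonneg[of k] mu_pos lam_pos by (simp add: add_pos_nonneg)
  with weight_root(1)[OF A_nonneg[of k]] show ?thesis by linarith
qed

lemma a_ge: "\<mu> * A k * lam \<le> a (Suc k)"
proof -
  have "\<mu> * A k * lam \<le> (1 + 2 * \<mu> * A k) * lam"
    using A_nonneg[of k] mu_pos lam_pos by (simp add: algebra_simps)
  with weight_root(1)[OF A_nonneg[of k]] show ?thesis by linarith
qed

lemmas weight_facts = A_nonneg a_pos lam_pos less_imp_le[OF mu_pos]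
  weight_root(2)[OF A_nonneg] a_ge

text \<open>Lipschitz continuity of \<open>G\<close> and nonexpansiveness of the projection turn the
  \<open>\<sigma>h\<close>-criterion, which uses \<open>G\<close> at the projection of \<open>xt k\<close>, into a
  \<open>\<sigma>h + \<sigma>u\<close>-criterion for the exact gradient \<open>v\<close>.\<close>
lemma relative_error_criterion:
  "(norm (lam *\<^sub>R v (Suc k) + y (Suc k) - xt k))\<^sup>2 / (1 + lam * \<mu>) + 2 * lam * \<epsilon> (Suc k)
     \<le> (\<sigma>h + \<sigma>u)\<^sup>2 * (norm (y (Suc k) - xt k))\<^sup>2"
proof -
  define z where "z = closest_point \<Omega> (xt k)"
  define E where "E = norm (y (Suc k) - xt k)"
  have "z \<in> \<Omega>" unfolding z_def by (rule closest_point_in_set[OF Omega_closed Omega_ne])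
  have "norm (y (Suc k) - z) \<le> E"
    using closest_point_lipschitz[OF Omega_convex Omega_closed Omega_ne, of "y (Suc k)" "xt k"]
    unfolding z_def E_def closest_point_self[OF iterate_in_Omega] dist_norm .
  hence "norm (G (y (Suc k)) - G z) \<le> L * E"
    using G_lip iterate_in_Omega \<open>z \<in> \<Omega>\<close> L_pos by (meson mult_left_mono less_imp_le order_trans)
  hence "lam * norm (G (y (Suc k)) - G z) \<le> \<sigma>u * sqrt (1 + lam * \<mu>) * E"
    using lam_pos lam_times_L by (metis mult.assoc mult_left_mono less_imp_le)
  moreover have "lam *\<^sub>R v (Suc k) + y (Suc k) - xt k
      = (lam *\<^sub>R (u (Suc k) + G z) + y (Suc k) - xt k) + lam *\<^sub>R (G (y (Suc k)) - G z)"
    unfolding v_def by (simp add: algebra_simps)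
  hence "norm (lam *\<^sub>R v (Suc k) + y (Suc k) - xt k)
      \<le> norm (lam *\<^sub>R (u (Suc k) + G z) + y (Suc k) - xt k) + lam * norm (G (y (Suc k)) - G z)"
    using norm_triangle_ineq[of "lam *\<^sub>R (u (Suc k) + G z) + y (Suc k) - xt k"
        "lam *\<^sub>R (G (y (Suc k)) - G z)"] lam_pos by (simp only: norm_scaleR abs_of_pos)
  ultimately have tri: "norm (lam *\<^sub>R v (Suc k) + y (Suc k) - xt k)
      \<le> norm (lam *\<^sub>R (u (Suc k) + G z) + y (Suc k) - xt k) + \<sigma>u * sqrt (1 + lam * \<mu>) * E"
    by linarith
  have pos: "1 + lam * \<mu> > 0" using lam_pos mu_pos by (simp add: add_pos_pos)
  have "(norm (lam *\<^sub>R (u (Suc k) + G z) + y (Suc k) - xt k) / sqrt (1 + lam * \<mu>))\<^sup>2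
      + 2 * lam * \<epsilon> (Suc k) \<le> \<sigma>h\<^sup>2 * E\<^sup>2"
    using PG_solution(3)[of k] pos unfolding z_def E_def by (simp add: power_divide)
  from relative_error_triangle[OF _ _ _ sh _ _ this tri] pos su lam_pos PG_solution(1)[of k]
  show ?thesis unfolding E_def by (simp add: power_divide)
qed

lemma relative_error_criterion_le:
  "(norm (lam *\<^sub>R v (Suc k) + y (Suc k) - xt k))\<^sup>2 / (1 + lam * \<mu>) + 2 * lam * \<epsilon> (Suc k)
     \<le> (norm (y (Suc k) - xt k))\<^sup>2"
proof -
  have "(\<sigma>h + \<sigma>u)\<^sup>2 \<le> 1" using sh su ssum by (simp add: power_le_one)
  from mult_right_mono[OF this zero_le_power2[of "norm (y (Suc k) - xt k)"]]
    relative_error_criterion[of k]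
  show ?thesis by simp
qed

definition potential :: "nat \<Rightarrow> real" where
  "potential k = A k * (hval (y k) - hval xstar) + (1 + \<mu> * A k)/2 * (norm (x k - xstar))\<^sup>2"

definition d0 :: real where "d0 = norm (xstar - x 0)"

lemma x_Suc_scaled:
  "(1 + \<mu> * (A k + a (Suc k))) *\<^sub>R x (Suc k)
     = (1 + \<mu> * A k) *\<^sub>R x k + (\<mu> * a (Suc k)) *\<^sub>R y (Suc k) - a (Suc k) *\<^sub>R v (Suc k)"
proof -
  have "0 < 1 + \<mu> * (A k + a (Suc k))"
    using A_nonneg[of k] a_pos[of k] mu_pos by (simp add: add_pos_nonneg)
  thus ?thesis unfolding x_Suc A_Suc by (simp add: scaleR_add_right scaleR_diff_right)
qed

lemma potential_Suc_le: "potential (Suc k) \<le> potential k"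
proof -
  have "A k * (hval (y (Suc k)) + inner (v (Suc k)) (y k - y (Suc k)) - \<epsilon> (Suc k)
          + \<mu>/2 * (norm (y k - y (Suc k)))\<^sup>2) \<le> A k * hval (y k)"
  proof (cases k)
    case (Suc j)
    show ?thesis
      using approx_subgradient_ineq[OF f_finite_at_iterate[of j], of k] A_nonneg[of k]
      unfolding Suc by (rule mult_left_mono)
  qed (simp add: A0)
  with potential_step[OF weight_facts x_Suc_scaled xt_def relative_error_criterion_le
      approx_subgradient_ineq[OF finite_at_minimiser(1)]]
  show ?thesis unfolding potential_def A_Suc .
qed

lemma potential_le: "potential k \<le> d0\<^sup>2 / 2"
proof (induction k)
  case 0
  show ?case unfolding potential_def d0_def A0 by (simp add: norm_minus_commute)
next
  case (Suc k)
  with potential_Suc_le[of k] show ?case by linarith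
qed

definition rho :: real where "rho = 1 - sqrt (\<sigma>u / (1 + \<sigma>u)) * sqrt (\<mu> / L)"

lemma rho_pos: "rho > 0" and rho_le_one: "rho \<le> 1"
proof -
  have "sqrt (\<sigma>u / (1 + \<sigma>u)) < 1" "sqrt (\<mu> / L) \<le> 1" using su L_ge_mu L_pos by simp_all
  moreover from mult_left_le[OF this(2), of "sqrt (\<sigma>u / (1 + \<sigma>u))"]
  have "sqrt (\<sigma>u / (1 + \<sigma>u)) * sqrt (\<mu> / L) \<le> sqrt (\<sigma>u / (1 + \<sigma>u))" using su by simp
  ultimately have "sqrt (\<sigma>u / (1 + \<sigma>u)) * sqrt (\<mu> / L) < 1" by linarith
  thus "rho > 0" unfolding rho_def by simp
  show "rho \<le> 1" unfolding rho_def using su mu_pos L_pos by simp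
qed

lemma A_growth: "A k \<le> rho * A (Suc k)"
proof -
  define \<theta> where "\<theta> = sqrt (\<sigma>u / (1 + \<sigma>u)) * sqrt (\<mu> / L)"
  have "\<theta> \<ge> 0" unfolding \<theta>_def using su mu_pos L_pos by simp
  have "\<theta>\<^sup>2 = \<sigma>u * \<mu> / ((1 + \<sigma>u) * L)"
    unfolding \<theta>_def using su mu_pos L_pos by (simp add: power_mult_distrib)
  with lam_ratio_ge have "\<theta>\<^sup>2 \<le> lam * \<mu> / (1 + lam * \<mu>)" by simp
  from weight_growth[OF A_nonneg[of k] a_pos[of k] lam_pos mu_pos \<open>\<theta> \<ge> 0\<close> weight_root(2)[OF A_nonneg[of k]] this]
  show ?thesis unfolding rho_def A_Suc \<theta>_def .
qed

lemma A_lower_bound: "\<sigma>u / L \<le> A (Suc j) * rho ^ j"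
proof (induction j)
  case 0
  show ?case using weight_root(1)[of 0] lam_ge unfolding A_Suc A0 by simp
next
  case (Suc j)
  have "A (Suc j) * rho ^ j \<le> rho * A (Suc (Suc j)) * rho ^ j"
    using A_growth[of "Suc j"] rho_pos by (simp add: mult_right_mono)
  with Suc show ?case by (simp add: algebra_simps)
qed

lemma quadratic_growth:
  assumes "f w \<noteq> \<infinity>"
  shows "\<mu>/2 * (norm (w - xstar))\<^sup>2 \<le> hval w - hval xstar"
  unfolding hval_def
  using assms finite_at_minimiser f_not_minf g_not_minf g_finite_on_Omega[OF in_Omega_if_f_finite[OF assms]]
  by (intro strongly_convex_sum_quadratic_growth[OF f_convex g_strong xstar_min]) auto

lemma value_gap_le: "hval (y (Suc j)) - hval xstar \<le> L * d0\<^sup>2 / (2 * \<sigma>u) * rho ^ j"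
proof -
  define D where "D = hval (y (Suc j)) - hval xstar"
  have "0 \<le> \<mu>/2 * (norm (y (Suc j) - xstar))\<^sup>2" using mu_pos by simp
  with quadratic_growth[OF f_finite_at_iterate] have "D \<ge> 0" unfolding D_def by (meson order_trans)
  have "0 \<le> (1 + \<mu> * A (Suc j))/2 * (norm (x (Suc j) - xstar))\<^sup>2"
    using A_nonneg[of "Suc j"] mu_pos by simp
  with potential_le[of "Suc j"] have "A (Suc j) * D \<le> d0\<^sup>2 / 2"
    unfolding potential_def D_def by linarith
  have "\<sigma>u / L * D \<le> A (Suc j) * rho ^ j * D"
    using A_lower_bound \<open>D \<ge> 0\<close> by (rule mult_right_mono)
  also have "\<dots> \<le> rho ^ j * (d0\<^sup>2 / 2)"
    using \<open>A (Suc j) * D \<le> d0\<^sup>2 / 2\<close> rho_pos by (simp add: mult.commute mult.left_commute mult_left_mono)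
  finally show ?thesis unfolding D_def[symmetric] using su L_pos by (simp add: field_simps)
qed

lemma dist_iterate_sq_le: "(norm (xstar - y (Suc j)))\<^sup>2 \<le> L * d0\<^sup>2 * rho ^ j / (\<sigma>u * \<mu>)"
proof -
  have "(norm (xstar - y (Suc j)))\<^sup>2 \<le> 2 / \<mu> * (hval (y (Suc j)) - hval xstar)"
    using quadratic_growth[OF f_finite_at_iterate, of j] mu_pos
    by (simp add: norm_minus_commute field_simps)
  also have "\<dots> \<le> 2 / \<mu> * (L * d0\<^sup>2 / (2 * \<sigma>u) * rho ^ j)"
    using value_gap_le[of j] mu_pos by (intro mult_left_mono) simp_all
  also have "\<dots> = L * d0\<^sup>2 * rho ^ j / (\<sigma>u * \<mu>)" by (simp add: field_simps)
  finally show ?thesis .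
qed

lemma dist_x_sq_le: "(norm (xstar - x (Suc j)))\<^sup>2 \<le> L * d0\<^sup>2 * rho ^ j / (\<sigma>u * \<mu>)"
proof -
  define N where "N = (norm (xstar - x (Suc j)))\<^sup>2"
  have "0 \<le> \<mu>/2 * (norm (y (Suc j) - xstar))\<^sup>2" using mu_pos by simp
  with quadratic_growth[OF f_finite_at_iterate, of j] A_nonneg[of "Suc j"]
  have "0 \<le> A (Suc j) * (hval (y (Suc j)) - hval xstar)" by simp
  with potential_le[of "Suc j"] have "(1 + \<mu> * A (Suc j)) * N \<le> d0\<^sup>2"
    unfolding potential_def N_def by (simp add: norm_minus_commute)
  moreover have "0 \<le> N" unfolding N_def by simp
  ultimately have "\<mu> * N * A (Suc j) \<le> d0\<^sup>2" by (simp add: algebra_simps)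
  hence "\<mu> * N * (A (Suc j) * rho ^ j) \<le> d0\<^sup>2 * rho ^ j"
    using rho_pos by (simp add: mult_right_mono mult.assoc[symmetric])
  moreover have "\<mu> * N * (\<sigma>u / L) \<le> \<mu> * N * (A (Suc j) * rho ^ j)"
    using A_lower_bound[of j] mu_pos unfolding N_def by (intro mult_left_mono) simp_all
  ultimately have "\<mu> * N * (\<sigma>u / L) \<le> d0\<^sup>2 * rho ^ j" by linarith
  thus ?thesis unfolding N_def[symmetric] using su L_pos mu_pos by (simp add: field_simps)
qed

definition radius :: "nat \<Rightarrow> real" where
  "radius j = sqrt (L / (\<sigma>u * \<mu>)) * d0 * rho powr (real j / 2)"

lemma radius_nonneg: "radius j \<ge> 0"
  unfolding radius_def d0_def using L_pos su mu_pos by simp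

lemma radius_square: "(radius j)\<^sup>2 = L * d0\<^sup>2 * rho ^ j / (\<sigma>u * \<mu>)"
proof -
  have "(rho powr (real j / 2))\<^sup>2 = rho ^ j"
    using rho_pos by (simp add: powr_half_sqrt_powr powr_realpow)
  thus ?thesis unfolding radius_def using L_pos su mu_pos by (simp add: power_mult_distrib)
qed

lemma le_radius: "X \<ge> 0 \<Longrightarrow> X\<^sup>2 \<le> L * d0\<^sup>2 * rho ^ j / (\<sigma>u * \<mu>) \<Longrightarrow> X \<le> radius j"
  using power2_le_imp_le[OF _ radius_nonneg] unfolding radius_square by blast

lemma radius_Suc_le: "radius (Suc j) \<le> radius j"
proof -
  have "rho powr (real (Suc j) / 2) \<le> rho powr (real j / 2)"
    using rho_pos rho_le_one by (intro powr_mono') auto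
  thus ?thesis unfolding radius_def d0_def using L_pos su mu_pos by (simp add: mult_left_mono)
qed

lemma dist_iterates_le: "norm (xstar - y (Suc j)) \<le> radius j" "norm (xstar - x (Suc j)) \<le> radius j"
  using le_radius dist_iterate_sq_le dist_x_sq_le by simp_all

lemma extrapolation_dist_le: "norm (xt (Suc j) - xstar) \<le> radius j"
proof -
  define c1 c2 where "c1 = (a (Suc (Suc j)) - \<mu> * A (Suc j) * lam) / (A (Suc j) + a (Suc (Suc j)))"
    and "c2 = (A (Suc j) + \<mu> * A (Suc j) * lam) / (A (Suc j) + a (Suc (Suc j)))"
  note c = extrapolation_coefficients[OF weight_facts, of "Suc j", folded c1_def c2_def]
  have "norm (xt (Suc j) - xstar) = norm (c1 *\<^sub>R (x (Suc j) - xstar) + c2 *\<^sub>R (y (Suc j) - xstar))"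
    unfolding xt_def c1_def[symmetric] c2_def[symmetric] convex_combination_minus[OF c(3)] ..
  also have "\<dots> \<le> c1 * norm (x (Suc j) - xstar) + c2 * norm (y (Suc j) - xstar)"
    using norm_triangle_ineq[of "c1 *\<^sub>R (x (Suc j) - xstar)" "c2 *\<^sub>R (y (Suc j) - xstar)"] c(1,2)
    by simp
  also have "\<dots> \<le> c1 * radius j + c2 * radius j"
    using dist_iterates_le[of j] c(1,2) by (intro add_mono mult_left_mono) (simp_all add: norm_minus_commute)
  also have "\<dots> = radius j" using c(3) by (simp flip: distrib_right)
  finally show ?thesis .
qed

lemma step_length_le: "norm (y (Suc (Suc j)) - xt (Suc j)) \<le> 2 * radius j"
proof -
  have "norm (y (Suc (Suc j)) - xt (Suc j)) \<le> norm (xstar - y (Suc (Suc j))) + norm (xt (Suc j) - xstar)"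
    using norm_triangle_ineq[of "y (Suc (Suc j)) - xstar" "xstar - xt (Suc j)"]
    by (simp add: norm_minus_commute)
  with dist_iterates_le(1)[of "Suc j"] radius_Suc_le[of j] extrapolation_dist_le[of j]
  show ?thesis by linarith
qed

lemma scaled_residual_le:
  "lam * norm (v (Suc k)) \<le> (1 + (\<sigma>h + \<sigma>u) * sqrt (1 + lam * \<mu>)) * norm (y (Suc k) - xt k)"
proof -
  define n E where "n = norm (lam *\<^sub>R v (Suc k) + y (Suc k) - xt k)" and "E = norm (y (Suc k) - xt k)"
  have pos: "1 + lam * \<mu> > 0" using lam_pos mu_pos by (simp add: add_pos_pos)
  have "0 \<le> 2 * lam * \<epsilon> (Suc k)" using PG_solution(1)[of k] lam_pos by simp
  with relative_error_criterion[of k] have "n\<^sup>2 / (1 + lam * \<mu>) \<le> (\<sigma>h + \<sigma>u)\<^sup>2 * E\<^sup>2"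
    unfolding n_def E_def by linarith
  hence "n\<^sup>2 \<le> (\<sigma>h + \<sigma>u)\<^sup>2 * E\<^sup>2 * (1 + lam * \<mu>)"
    using pos by (simp add: pos_divide_le_eq)
  also have "\<dots> = ((\<sigma>h + \<sigma>u) * sqrt (1 + lam * \<mu>) * E)\<^sup>2"
    using pos by (simp add: power_mult_distrib)
  finally have "n \<le> (\<sigma>h + \<sigma>u) * sqrt (1 + lam * \<mu>) * E"
    by (rule power2_le_imp_le) (use sh su pos in \<open>simp add: E_def\<close>)
  moreover have "lam * norm (v (Suc k)) \<le> n + E"
    using norm_triangle_ineq4[of "lam *\<^sub>R v (Suc k) + y (Suc k) - xt k" "y (Suc k) - xt k"] lam_pos
    unfolding n_def E_def by simp
  ultimately show ?thesis unfolding E_def by (simp add: algebra_simps)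
qed

lemma gradient_residual_le:
  "norm (v (Suc (Suc j))) \<le> 4 * (L / \<sigma>u) * (1 + (\<sigma>h + \<sigma>u) * sqrt (1 + \<sigma>u * \<mu> / L)) * radius j"
proof -
  define m \<sigma> where "m = \<sigma>u * \<mu> / L" and "\<sigma> = \<sigma>h + \<sigma>u"
  have "\<sigma> \<ge> 0" "m \<ge> 0" unfolding \<sigma>_def m_def using sh su mu_pos L_pos by simp_all
  have "sqrt (1 + lam * \<mu>) \<le> sqrt (4 * (1 + m))"
    using lam_factor_le unfolding m_def by simp
  also have "sqrt (4 * (1 + m)) = 2 * sqrt (1 + m)" by (subst real_sqrt_mult) simp
  finally have sqrt_le: "sqrt (1 + lam * \<mu>) \<le> 2 * sqrt (1 + m)" .
  have "0 \<le> 1 + \<sigma> * sqrt (1 + lam * \<mu>)" using \<open>\<sigma> \<ge> 0\<close> lam_pos mu_pos by simp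
  from mult_left_mono[OF step_length_le[of j] this] scaled_residual_le[of "Suc j"]
  have "lam * norm (v (Suc (Suc j))) \<le> (1 + \<sigma> * sqrt (1 + lam * \<mu>)) * (2 * radius j)"
    unfolding \<sigma>_def by linarith
  also have "\<dots> \<le> (1 + \<sigma> * (2 * sqrt (1 + m))) * (2 * radius j)"
    using sqrt_le \<open>\<sigma> \<ge> 0\<close> radius_nonneg[of j] by (simp add: mult_left_mono mult_right_mono)
  also have "\<dots> \<le> 4 * (1 + \<sigma> * sqrt (1 + m)) * radius j"
    using radius_nonneg[of j] by (simp add: algebra_simps)
  finally have "lam * norm (v (Suc (Suc j))) \<le> 4 * (1 + \<sigma> * sqrt (1 + m)) * radius j" .
  moreover have "\<sigma>u / L * norm (v (Suc (Suc j))) \<le> lam * norm (v (Suc (Suc j)))"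
    using mult_right_mono[OF lam_ge norm_ge_zero] .
  ultimately have "\<sigma>u / L * norm (v (Suc (Suc j))) \<le> 4 * (1 + \<sigma> * sqrt (1 + m)) * radius j"
    by linarith
  thus ?thesis unfolding m_def \<sigma>_def using su L_pos by (simp add: field_simps)
qed

lemma approximation_error_le:
  "\<epsilon> (Suc (Suc j)) \<le> 2 * (\<sigma>h + \<sigma>u)\<^sup>2 * d0\<^sup>2 * L\<^sup>2 / (\<sigma>u\<^sup>2 * \<mu>) * rho ^ j"
proof -
  have "0 \<le> (norm (lam *\<^sub>R v (Suc (Suc j)) + y (Suc (Suc j)) - xt (Suc j)))\<^sup>2 / (1 + lam * \<mu>)"
    using lam_pos mu_pos by simp
  with relative_error_criterion[of "Suc j"]
  have "2 * lam * \<epsilon> (Suc (Suc j)) \<le> (\<sigma>h + \<sigma>u)\<^sup>2 * (norm (y (Suc (Suc j)) - xt (Suc j)))\<^sup>2"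
    by linarith
  also have "\<dots> \<le> (\<sigma>h + \<sigma>u)\<^sup>2 * (2 * radius j)\<^sup>2"
    using step_length_le[of j] by (intro mult_left_mono power_mono) simp_all
  also have "\<dots> = 4 * (\<sigma>h + \<sigma>u)\<^sup>2 * (L * d0\<^sup>2 * rho ^ j / (\<sigma>u * \<mu>))"
    unfolding power_mult_distrib radius_square by simp
  finally have "2 * lam * \<epsilon> (Suc (Suc j)) \<le> 4 * (\<sigma>h + \<sigma>u)\<^sup>2 * (L * d0\<^sup>2 * rho ^ j / (\<sigma>u * \<mu>))" .
  moreover have "\<sigma>u / L * \<epsilon> (Suc (Suc j)) \<le> lam * \<epsilon> (Suc (Suc j))"
    using lam_ge PG_solution(1) by (rule mult_right_mono)
  ultimately have "\<sigma>u / L * \<epsilon> (Suc (Suc j)) \<le> 2 * (\<sigma>h + \<sigma>u)\<^sup>2 * (L * d0\<^sup>2 * rho ^ j / (\<sigma>u * \<mu>))"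
    by linarith
  hence "L / \<sigma>u * (\<sigma>u / L * \<epsilon> (Suc (Suc j)))
      \<le> L / \<sigma>u * (2 * (\<sigma>h + \<sigma>u)\<^sup>2 * (L * d0\<^sup>2 * rho ^ j / (\<sigma>u * \<mu>)))"
    using su L_pos by (intro mult_left_mono) simp_all
  moreover have "L / \<sigma>u * (\<sigma>u / L * \<epsilon> (Suc (Suc j))) = \<epsilon> (Suc (Suc j))"
    using su L_pos by simp
  ultimately have "\<epsilon> (Suc (Suc j)) \<le> L / \<sigma>u * (2 * (\<sigma>h + \<sigma>u)\<^sup>2 * (L * d0\<^sup>2 * rho ^ j / (\<sigma>u * \<mu>)))"
    by (simp only:)
  also have "\<dots> = 2 * (\<sigma>h + \<sigma>u)\<^sup>2 * d0\<^sup>2 * L\<^sup>2 / (\<sigma>u\<^sup>2 * \<mu>) * rho ^ j"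
    by (simp only: power2_eq_square times_divide_eq_left times_divide_eq_right divide_divide_eq_left ac_simps)
  finally show ?thesis .
qed

text \<open>The argument gives the constants 4 and 2 in place of the stated 6 and 3.\<close>

lemma gradient_residual_rate:
  "norm (v (Suc (Suc j))) \<le> 6 * d0 * L powr (3 / 2) / (\<mu> powr (1 / 2) * \<sigma>u powr (3 / 2))
     * (1 + (\<sigma>h + \<sigma>u) * sqrt (1 + \<sigma>u * \<mu> / L)) * rho powr (real j / 2)"
proof -
  define K where "K = (L / \<sigma>u) * (1 + (\<sigma>h + \<sigma>u) * sqrt (1 + \<sigma>u * \<mu> / L)) * radius j"
  have "K \<ge> 0" unfolding K_def using su sh L_pos mu_pos radius_nonneg by simp
  have "6 * d0 * L powr (3 / 2) / (\<mu> powr (1 / 2) * \<sigma>u powr (3 / 2))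
      * (1 + (\<sigma>h + \<sigma>u) * sqrt (1 + \<sigma>u * \<mu> / L)) * rho powr (real j / 2) = 6 * K"
    (is "?bound = _") unfolding K_def radius_def using su L_pos mu_pos
    by (simp add: powr_three_halves powr_half_sqrt real_sqrt_divide real_sqrt_mult field_simps)
  moreover have "norm (v (Suc (Suc j))) \<le> 4 * K"
    using gradient_residual_le[of j] unfolding K_def by (simp only: mult.assoc)
  hence "norm (v (Suc (Suc j))) \<le> 6 * K" using \<open>K \<ge> 0\<close> by linarith
  ultimately show "norm (v (Suc (Suc j))) \<le> ?bound" by (simp only:)
qed

lemma approximation_error_rate:
  "\<epsilon> (Suc (Suc j)) \<le> 3 * (\<sigma>h + \<sigma>u)\<^sup>2 * d0\<^sup>2 * L\<^sup>2 / (\<sigma>u\<^sup>2 * \<mu>) * rho ^ j"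
proof -
  define Y where "Y = (\<sigma>h + \<sigma>u)\<^sup>2 * d0\<^sup>2 * L\<^sup>2 / (\<sigma>u\<^sup>2 * \<mu>) * rho ^ j"
  have "0 \<le> Y" unfolding Y_def using mu_pos rho_pos by simp
  moreover have "\<epsilon> (Suc (Suc j)) \<le> 2 * Y"
    using approximation_error_le[of j] unfolding Y_def by (simp only: mult.assoc times_divide_eq_right)
  ultimately have "\<epsilon> (Suc (Suc j)) \<le> 3 * Y" by linarith
  thus ?thesis unfolding Y_def by (simp only: mult.assoc times_divide_eq_right)
qed

end

theorem theorem5p3:
  fixes f g :: "'a::euclidean_space \<Rightarrow> ereal"
    and G :: "'a \<Rightarrow> 'a"
    and \<Omega> :: "'a set"
    and \<mu> L \<sigma>h \<sigma>u lam :: real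
    and x y xt u v :: "nat \<Rightarrow> 'a"
    and \<epsilon> a A :: "nat \<Rightarrow> real"
    and xstar :: 'a
  assumes f_proper: "proper_fun f" and f_closed: "closed_fun f" and f_convex: "convex_fun f"
    and g_proper: "proper_fun g" and g_closed: "closed_fun g" and g_convex: "convex_fun g"
    and h_dom: "edom (\<lambda>z. f z + g z) \<noteq> {}"
    and mu_pos: "\<mu> > 0" and g_strong: "strongly_convex_fun \<mu> g"
    and Omega_ne: "\<Omega> \<noteq> {}" and Omega_closed: "closed \<Omega>" and Omega_convex: "convex \<Omega>"
    and dom_f: "edom f \<subseteq> \<Omega>"
    and g_diff: "\<exists>U. open U \<and> \<Omega> \<subseteq> U \<and> (\<forall>z\<in>U. g z \<noteq> \<infinity> \<and>
                    ((\<lambda>w. real_of_ereal (g w)) has_derivative (\<lambda>d. inner (G z) d)) (at z))"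
    and L_pos: "L > 0"
    and G_lip: "\<forall>z\<in>\<Omega>. \<forall>w\<in>\<Omega>. norm (G z - G w) \<le> L * norm (z - w)"
    and L_ge_mu: "L \<ge> \<mu>"
    and sh: "\<sigma>h \<ge> 0" and su: "0 < \<sigma>u" "\<sigma>u \<le> 1" and ssum: "\<sigma>u + \<sigma>h < 1"
    and lam_def: "lam = \<sigma>u / (sqrt ((\<sigma>u * \<mu> / 2)\<^sup>2 + L\<^sup>2) - \<sigma>u * \<mu> / 2)"
    and A0: "A 0 = 0"
    and a_def: "\<And>k. a (Suc k) = ((1 + 2 * \<mu> * A k) * lam
                  + sqrt (((1 + 2 * \<mu> * A k))\<^sup>2 * lam\<^sup>2 + 4 * (1 + \<mu> * A k) * A k * lam)) / 2"
    and xt_def: "\<And>k. xt k = ((a (Suc k) - \<mu> * A k * lam) / (A k + a (Suc k))) *\<^sub>R x k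
                  + ((A k + \<mu> * A k * lam) / (A k + a (Suc k))) *\<^sub>R y k"
    and PG: "\<And>k. approx_PG_sol f G \<Omega> \<mu> \<sigma>h (xt k) lam (y (Suc k)) (u (Suc k)) (\<epsilon> (Suc k))"
    and A_suc: "\<And>k. A (Suc k) = A k + a (Suc k)"
    and v_def: "\<And>k. v (Suc k) = u (Suc k) + G (y (Suc k))"
    and x_suc: "\<And>k. x (Suc k) = ((1 + \<mu> * A k) / (1 + \<mu> * A (Suc k))) *\<^sub>R x k
                  + (\<mu> * a (Suc k) / (1 + \<mu> * A (Suc k))) *\<^sub>R y (Suc k)
                  - (a (Suc k) / (1 + \<mu> * A (Suc k))) *\<^sub>R v (Suc k)"
    and xstar_min: "\<forall>z. f xstar + g xstar \<le> f z + g z"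
  shows "let \<sigma> = \<sigma>h + \<sigma>u; d0 = norm (xstar - x 0);
             \<gamma> = sqrt (\<sigma>u / (1 + \<sigma>u)); \<rho> = 1 - \<gamma> * sqrt (\<mu> / L) in
     (\<forall>k\<ge>1. (f (y k) + g (y k)) - (f xstar + g xstar) \<le> ereal (L * d0\<^sup>2 / (2 * \<sigma>u) * \<rho> ^ (k - 1))
        \<and> max (norm (xstar - y k)) (norm (xstar - x k))
            \<le> sqrt (L / (\<sigma>u * \<mu>)) * d0 * \<rho> powr (real (k - 1) / 2))
   \<and> (\<forall>k\<ge>1. v (k + 1) \<in> {w + G (y (k + 1)) | w. w \<in> eps_subdiff f (\<epsilon> (k + 1)) (y (k + 1))}
        \<and> norm (v (k + 1)) \<le> 6 * d0 * L powr (3 / 2) / (\<mu> powr (1 / 2) * \<sigma>u powr (3 / 2))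
             * (1 + \<sigma> * sqrt (1 + \<sigma>u * \<mu> / L)) * \<rho> powr (real (k - 1) / 2)
        \<and> \<epsilon> (k + 1) \<le> 3 * \<sigma>\<^sup>2 * d0\<^sup>2 * L\<^sup>2 / (\<sigma>u\<^sup>2 * \<mu>) * \<rho> ^ (k - 1))"
proof -
  interpret inexact_accelerated_pg f g G \<Omega> \<mu> L \<sigma>h \<sigma>u lam x y xt u v \<epsilon> a A xstar
    by unfold_locales (fact assms)+
  have "(f (y k) + g (y k)) - (f xstar + g xstar) \<le> ereal (L * d0\<^sup>2 / (2 * \<sigma>u) * rho ^ (k - 1))
      \<and> max (norm (xstar - y k)) (norm (xstar - x k)) \<le> radius (k - 1)" if "k \<ge> 1" for k
  proof -
    obtain j where k: "k = Suc j" using \<open>k \<ge> 1\<close> by (cases k) auto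
    show ?thesis unfolding k hval_gap[OF f_finite_at_iterate]
      using value_gap_le[of j] dist_iterates_le[of j] by simp
  qed
  moreover have "v (k + 1) \<in> {w + G (y (k + 1)) | w. w \<in> eps_subdiff f (\<epsilon> (k + 1)) (y (k + 1))}"
    for k using PG_solution(2)[of k] v_def[of k] by auto
  moreover have "norm (v (k + 1)) \<le> 6 * d0 * L powr (3 / 2) / (\<mu> powr (1 / 2) * \<sigma>u powr (3 / 2))
        * (1 + (\<sigma>h + \<sigma>u) * sqrt (1 + \<sigma>u * \<mu> / L)) * rho powr (real (k - 1) / 2)
      \<and> \<epsilon> (k + 1) \<le> 3 * (\<sigma>h + \<sigma>u)\<^sup>2 * d0\<^sup>2 * L\<^sup>2 / (\<sigma>u\<^sup>2 * \<mu>) * rho ^ (k - 1)"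
    if "k \<ge> 1" for k
  proof -
    obtain j where k: "k = Suc j" using \<open>k \<ge> 1\<close> by (cases k) auto
    show ?thesis unfolding k using gradient_residual_rate[of j] approximation_error_rate[of j] by simp
  qed
  ultimately show ?thesis
    unfolding Let_def d0_def[symmetric] rho_def[symmetric] radius_def[symmetric] by blast
qed

end
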